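(* Let $\mathcal{M}$ be a matroid with $n$ elements and rank $r\geq 1$, with distinct element weights. Consider the following online algorithm, which uses only comparisons between weights of elements already seen. With probability $1/2$, run the classical secretary algorithm (observe the first $\lfloor n/e\rfloor$ elements, then accept the first element heavier than all observed ones). Otherwise: draw $m\sim\mathrm{Bin}(n,1/2)$, call the first $m$ arriving elements the sample, and compute the maximum-weight independent set $A=\{a_1,\dots,a_k\}$ of the sample with $w(a_1)\geq\dots\geq w(a_k)$; choose $\ell\in\{1,3,9,\dots,3^t\}$ uniformly at random, where $t=\lfloor\log_3 r\rfloor$ if $r$ is known, and otherwise $t$ is chosen uniformly from $\{\lfloor\log_3 k\rfloor,\lfloor\log_3 k\rfloor+1\}$; then run the greedy procedure (accept an element if the accepted set stays independent) on the non-sampled elements, as they arrive, that are heavier than $a_\ell$ (on all non-sampled elements if $\ell>k$). Then, in both versions (rank known or unknown), this algorithm is $O(\log r)$-competitive in the zero information model: there is an absolute constant $c$ such that $c\,(1+\log r)\,\mathbb{E}[w(\mathrm{ALG})]\geq w(\mathrm{OPT})$ for every matroid of rank $r$ and every weight assignment.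
   Context: Zero information model of the matroid secretary problem: an adversary assigns arbitrary nonnegative weights to the elements; the elements are revealed in uniformly random order; the online algorithm irrevocably accepts or rejects each element on arrival, keeping the accepted set independent. $\mathrm{OPT}$ is a maximum-weight independent set of $\mathcal{M}$ and $w(S)=\sum_{e\in S}w(e)$; the expectation is over the random order and the algorithm's randomness. *)

theory Defs
  imports "HOL-Probability.Probability" "HOL-Combinatorics.Multiset_Permutations"
begin

definition matroid :: "'a set \<Rightarrow> ('a set \<Rightarrow> bool) \<Rightarrow> bool" where
  "matroid E indep \<longleftrightarrow>
     finite E \<and> indep {} \<and> (\<forall>I. indep I \<longrightarrow> I \<subseteq> E) \<and>
     (\<forall>I J. indep J \<and> I \<subseteq> J \<longrightarrow> indep I) \<and>
     (\<forall>I J. indep I \<and> indep J \<and> card I < card J \<longrightarrow> (\<exists>x\<in>J - I. indep (insert x I)))"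

definition mrank :: "'a set \<Rightarrow> ('a set \<Rightarrow> bool) \<Rightarrow> nat" where
  "mrank E indep = Max (card ` {I. indep I})"

definition opt_weight :: "'a set \<Rightarrow> ('a set \<Rightarrow> bool) \<Rightarrow> ('a \<Rightarrow> real) \<Rightarrow> real" where
  "opt_weight E indep w = Max ((\<lambda>I. sum w I) ` {I. indep I})"

fun greedy_on :: "('a set \<Rightarrow> bool) \<Rightarrow> 'a set \<Rightarrow> 'a list \<Rightarrow> 'a set" where
  "greedy_on indep S [] = S"
| "greedy_on indep S (x # xs) =
     greedy_on indep (if indep (insert x S) then insert x S else S) xs"

fun greedy_list :: "('a set \<Rightarrow> bool) \<Rightarrow> 'a list \<Rightarrow> 'a list \<Rightarrow> 'a list" where
  "greedy_list indep acc [] = acc"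
| "greedy_list indep acc (x # xs) =
     (if indep (insert x (set acc)) then greedy_list indep (acc @ [x]) xs
      else greedy_list indep acc xs)"

text \<open>Maximum-weight independent set of the sample S (list), as a list
  a_1, ..., a_k sorted by decreasing weight (computed by the greedy algorithm
  on the sample sorted by decreasing weight).\<close>
definition sample_mwis :: "('a set \<Rightarrow> bool) \<Rightarrow> ('a \<Rightarrow> real) \<Rightarrow> 'a list \<Rightarrow> 'a list" where
  "sample_mwis indep w S = greedy_list indep [] (rev (sort_key w S))"

text \<open>Classical secretary algorithm on arrival order \<sigma> of n elements: observe the
  first floor(n/e) elements, then accept the first element heavier than all
  observed ones (provided accepting it is feasible, i.e. it is not a loop).\<close>
definition classical_secretary ::
  "('a set \<Rightarrow> bool) \<Rightarrow> ('a \<Rightarrow> real) \<Rightarrow> 'a list \<Rightarrow> 'a set" where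
  "classical_secretary indep w \<sigma> =
     (let s = nat \<lfloor>real (length \<sigma>) / exp 1\<rfloor>;
          obs = take s \<sigma>
      in case find (\<lambda>x. \<forall>y\<in>set obs. w y < w x) (drop s \<sigma>) of
           None \<Rightarrow> {}
         | Some x \<Rightarrow> (if indep {x} then {x} else {}))"

text \<open>Second branch, given the arrival order \<sigma>, the sample size m and the
  (1-based) threshold index l.\<close>
definition threshold_greedy ::
  "('a set \<Rightarrow> bool) \<Rightarrow> ('a \<Rightarrow> real) \<Rightarrow> 'a list \<Rightarrow> nat \<Rightarrow> nat \<Rightarrow> 'a set" where
  "threshold_greedy indep w \<sigma> m l =
     (let A = sample_mwis indep w (take m \<sigma>);
          k = length A
      in greedy_on indep {}
           (filter (\<lambda>x. k < l \<or> w (A ! (l - 1)) < w x) (drop m \<sigma>)))"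

text \<open>floor(log_3 k) for k \<ge> 1 (and 0 for k = 0).\<close>
definition flog3 :: "nat \<Rightarrow> nat" where
  "flog3 k = nat \<lfloor>log 3 (real k)\<rfloor>"

definition secretary_alg ::
  "bool \<Rightarrow> 'a set \<Rightarrow> ('a set \<Rightarrow> bool) \<Rightarrow> ('a \<Rightarrow> real) \<Rightarrow> 'a set pmf" where
  "secretary_alg known E indep w =
     bind_pmf (pmf_of_set (permutations_of_set E)) (\<lambda>\<sigma>.
     bind_pmf (bernoulli_pmf (1/2)) (\<lambda>b.
       if b then return_pmf (classical_secretary indep w \<sigma>)
       else
       bind_pmf (binomial_pmf (card E) (1/2)) (\<lambda>m.
         let k = length (sample_mwis indep w (take m \<sigma>)) in
         bind_pmf (if known then return_pmf (flog3 (mrank E indep))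
                   else pmf_of_set {flog3 k, flog3 k + 1}) (\<lambda>t.
         bind_pmf (pmf_of_set {0..t}) (\<lambda>i.
           return_pmf (threshold_greedy indep w \<sigma> m (3 ^ i)))))))"

end

theory Submission
  imports Defs
begin

text \<open>Let \<open>b\<^sub>1 > b\<^sub>2 > \<dots> > b\<^sub>r\<close> be the optimum, i.e. the greedy basis. Grouping the indices
  into the blocks \<open>[3^(i+1) - 2, 3^(i+2) - 2)\<close> bounds \<open>w(OPT)\<close> by \<open>18 \<Sum>\<^sub>i g\<^sub>i\<close> over
  \<open>i \<le> \<lfloor>log\<^sub>3 r\<rfloor>\<close>, where \<open>g\<^sub>0 = w(b\<^sub>1)\<close> and \<open>g\<^sub>i = (3^i - 1)/2 \<cdot> w(b\<^bsub>3^(i+1) - 2\<^esub>)\<close>.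
  The set of the first \<open>m \<sim> Bin(n, 1/2)\<close> elements of a uniformly random order is a uniformly
  random subset of \<open>E\<close>. For each \<open>i \<ge> 1\<close> there is an event of probability at least \<open>1/4\<close>,
  an intersection of two independent "at least half" events on disjoint blocks of the optimum,
  on which the sample threshold \<open>a\<^sub>\<ell>\<close> for \<open>\<ell> = 3^i\<close> lies strictly below \<open>b\<^sub>1, \<dots>, b\<^bsub>3^i - 1\<^esub>\<close>
  and not below \<open>w(b\<^bsub>3^(i+1) - 2\<^esub>)\<close>, while at least half of \<open>b\<^sub>1, \<dots>, b\<^bsub>3^i - 1\<^esub>\<close> are
  unsampled; the greedy phase then collects at least that many elements, each of weight at
  least \<open>w(b\<^bsub>3^(i+1) - 2\<^esub>)\<close>, hence weight at least \<open>g\<^sub>i\<close> (similarly for \<open>i = 0\<close>). Each \<open>\<ell> = 3^i\<close> with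
  \<open>i \<le> \<lfloor>log\<^sub>3 r\<rfloor>\<close> is chosen with probability at least \<open>1/(\<lfloor>log\<^sub>3 r\<rfloor> + 2)\<close>, whether or not
  \<open>r\<close> is known, so \<open>w(OPT) \<le> 144 (\<lfloor>log\<^sub>3 r\<rfloor> + 2) E[w(ALG)] \<le> 288 (1 + ln r) E[w(ALG)]\<close>.
  The classical-secretary branch is only used through the non-negativity of its gain.\<close>

section \<open>Matroids and the greedy algorithm\<close>

lemma matroid_finite: "matroid E indep \<Longrightarrow> finite E"
  by (simp add: matroid_def)

lemma matroid_indep_empty: "matroid E indep \<Longrightarrow> indep {}"
  by (simp add: matroid_def)

lemma matroid_indep_subset_ground: "matroid E indep \<Longrightarrow> indep I \<Longrightarrow> I \<subseteq> E"
  by (simp add: matroid_def)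

lemma matroid_indep_subset: "matroid E indep \<Longrightarrow> indep J \<Longrightarrow> I \<subseteq> J \<Longrightarrow> indep I"
  unfolding matroid_def by blast

lemma matroid_augment:
  "matroid E indep \<Longrightarrow> indep I \<Longrightarrow> indep J \<Longrightarrow> card I < card J \<Longrightarrow> \<exists>x\<in>J - I. indep (insert x I)"
  unfolding matroid_def by blast

lemma matroid_indep_finite: "matroid E indep \<Longrightarrow> indep I \<Longrightarrow> finite I"
  using matroid_finite matroid_indep_subset_ground finite_subset by metis

lemma card_indep_le_maximal:
  assumes M: "matroid E indep" and R: "indep R" "R \<subseteq> X"
    and maximal: "\<forall>y\<in>X - R. \<not> indep (insert y R)"
    and I: "indep I" "I \<subseteq> X"
  shows "card I \<le> card R"
proof (rule ccontr)
  assume "\<not> card I \<le> card R"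
  then obtain x where "x \<in> I - R" "indep (insert x R)"
    using matroid_augment[OF M R(1) I(1)] by auto
  with maximal I(2) show False by blast
qed

lemma greedy_on_subset: "S \<subseteq> greedy_on indep S xs \<and> greedy_on indep S xs \<subseteq> S \<union> set xs"
proof (induction xs arbitrary: S)
  case (Cons x xs)
  then show ?case by (cases "indep (insert x S)") (simp_all, blast+)
qed simp

lemma greedy_on_indep: "indep S \<Longrightarrow> indep (greedy_on indep S xs)"
  by (induction xs arbitrary: S) auto

lemma greedy_on_maximal:
  assumes M: "matroid E indep" and "y \<in> set xs" "y \<notin> greedy_on indep S xs"
  shows "\<not> indep (insert y (greedy_on indep S xs))"
  using assms(2,3)
proof (induction xs arbitrary: S)
  case (Cons x xs)
  show ?case
  proof (cases "y = x")
    case True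
    then have rejected: "\<not> indep (insert x S)"
      using Cons.prems(2) greedy_on_subset[of "insert x S" indep xs] by auto
    have "insert x S \<subseteq> insert y (greedy_on indep S (x # xs))"
      using True rejected greedy_on_subset[of S indep xs] by auto
    then show ?thesis using rejected matroid_indep_subset[OF M] by blast
  next
    case False
    then show ?thesis using Cons by simp
  qed
qed simp

lemma set_greedy_list: "set (greedy_list indep acc xs) = greedy_on indep (set acc) xs"
  by (induction xs arbitrary: acc) simp_all

lemma greedy_list_append:
  "greedy_list indep acc (xs @ ys) = greedy_list indep (greedy_list indep acc xs) ys"
  by (induction xs arbitrary: acc) auto

lemma greedy_list_extends: "\<exists>R. greedy_list indep acc xs = acc @ R \<and> set R \<subseteq> set xs"
proof (induction xs arbitrary: acc)
  case (Cons x xs)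
  obtain R where "greedy_list indep (acc @ [x]) xs = (acc @ [x]) @ R" "set R \<subseteq> set xs"
    using Cons.IH by blast
  moreover obtain R' where "greedy_list indep acc xs = acc @ R'" "set R' \<subseteq> set xs"
    using Cons.IH by blast
  ultimately show ?case by (cases "indep (insert x (set acc))") (auto intro!: exI[of _ "x # R"])
qed simp

lemma greedy_list_distinct: "distinct (acc @ xs) \<Longrightarrow> distinct (greedy_list indep acc xs)"
  by (induction xs arbitrary: acc) auto

lemma greedy_list_sorted_wrt: "sorted_wrt P (acc @ xs) \<Longrightarrow> sorted_wrt P (greedy_list indep acc xs)"
proof (induction xs arbitrary: acc)
  case (Cons x xs)
  have "sorted_wrt P ((acc @ [x]) @ xs)" "sorted_wrt P (acc @ xs)"
    using Cons.prems by (auto simp: sorted_wrt_append)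
  then show ?case using Cons.IH by simp
qed simp

lemma greedy_on_weight_ge:
  assumes M: "matroid E indep" and mu: "0 \<le> \<mu>"
    and heavy: "\<forall>x\<in>set xs. indep {x} \<longrightarrow> \<mu> \<le> w x"
    and I: "indep I" "I \<subseteq> set xs"
  shows "real (card I) * \<mu> \<le> sum w (greedy_on indep {} xs)"
proof -
  define G where "G = greedy_on indep {} xs"
  have G: "indep G" "G \<subseteq> set xs"
    unfolding G_def
    using greedy_on_indep matroid_indep_empty[OF M] greedy_on_subset[of "{}" indep xs]
    by auto
  have "card I \<le> card G"
    using card_indep_le_maximal[OF M G _ I] greedy_on_maximal[OF M] unfolding G_def by blast
  then have "real (card I) * \<mu> \<le> (\<Sum>x\<in>G. \<mu>)" using mu by (simp add: mult_right_mono)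
  also have "\<dots> \<le> sum w G"
    using heavy G matroid_indep_subset[OF M G(1)] by (intro sum_mono) auto
  finally show ?thesis unfolding G_def .
qed

section \<open>The maximum-weight independent set of a sample\<close>

lemma sorted_wrt_decreasing_rev_sort_key:
  fixes w :: "'a \<Rightarrow> 'b::linorder"
  assumes "distinct L" "inj_on w (set L)"
  shows "sorted_wrt (\<lambda>x y. w y < w x) (rev (sort_key w L))"
proof -
  have "distinct (map w (sort_key w L))"
    using assms by (simp add: distinct_map)
  then have "sorted_wrt (<) (map w (sort_key w L))"
    by (simp add: strict_sorted_iff)
  then show ?thesis by (simp add: sorted_wrt_map sorted_wrt_rev)
qed

context
  fixes E :: "'a set" and indep and w :: "'a \<Rightarrow> real" and L :: "'a list"
  assumes M: "matroid E indep" and distinct_L: "distinct L" and inj_L: "inj_on w (set L)"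
begin

lemma sample_mwis_basic:
  "set (sample_mwis indep w L) \<subseteq> set L" "distinct (sample_mwis indep w L)"
  "indep (set (sample_mwis indep w L))" "sorted_wrt (\<lambda>x y. w y < w x) (sample_mwis indep w L)"
proof -
  have sorted: "sorted_wrt (\<lambda>x y. w y < w x) (rev (sort_key w L))"
    by (rule sorted_wrt_decreasing_rev_sort_key[OF distinct_L inj_L])
  show "set (sample_mwis indep w L) \<subseteq> set L"
    using greedy_on_subset[of "{}" indep "rev (sort_key w L)"]
    by (simp add: sample_mwis_def set_greedy_list)
  show "distinct (sample_mwis indep w L)"
    using greedy_list_distinct[of "[]" "rev (sort_key w L)" indep] distinct_L
    by (simp add: sample_mwis_def)
  show "indep (set (sample_mwis indep w L))"
    using greedy_on_indep[of indep "{}", OF matroid_indep_empty[OF M]]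
    by (simp add: sample_mwis_def set_greedy_list)
  show "sorted_wrt (\<lambda>x y. w y < w x) (sample_mwis indep w L)"
    using greedy_list_sorted_wrt[of _ "[]" "rev (sort_key w L)" indep] sorted
    by (simp add: sample_mwis_def)
qed

text \<open>Greedy by decreasing weight restricts to greedy on every upper level set \<open>{x. P (w x)}\<close>,
  so the elements of the sample optimum in such a level set form a maximum independent
  subset of it, and they come first.\<close>
lemma sample_mwis_split:
  assumes up: "\<And>a b. P a \<Longrightarrow> a \<le> b \<Longrightarrow> P b"
  obtains R1 R2 where "sample_mwis indep w L = R1 @ R2"
    "\<forall>y\<in>set R1. P (w y)" "\<forall>y\<in>set R2. \<not> P (w y)"
    "\<forall>I. indep I \<and> I \<subseteq> set L \<and> (\<forall>y\<in>I. P (w y)) \<longrightarrow> card I \<le> length R1"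
proof -
  define D where "D = rev (sort_key w L)"
  define D1 where "D1 = takeWhile (\<lambda>y. P (w y)) D"
  define D2 where "D2 = dropWhile (\<lambda>y. P (w y)) D"
  have D: "D = D1 @ D2" "set D = set L" "distinct D"
    using distinct_L unfolding D1_def D2_def D_def by auto
  have D2_low: "\<forall>y\<in>set D2. \<not> P (w y)"
  proof
    fix y assume y: "y \<in> set D2"
    then obtain h t where ht: "D2 = h # t" by (cases D2) auto
    have "sorted_wrt (\<lambda>x y. w y < w x) (D1 @ D2)"
      using sorted_wrt_decreasing_rev_sort_key[OF distinct_L inj_L] D(1) by (simp add: D_def)
    then have "\<forall>z\<in>set t. w z < w h" by (simp add: sorted_wrt_append ht)
    moreover have "\<not> P (w h)" using hd_dropWhile[of "\<lambda>y. P (w y)" D] ht unfolding D2_def by simp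
    ultimately show "\<not> P (w y)" using y ht up less_imp_le by (metis set_ConsD)
  qed
  define R1 where "R1 = greedy_list indep [] D1"
  obtain R2 where R2: "greedy_list indep R1 D2 = R1 @ R2" "set R2 \<subseteq> set D2"
    using greedy_list_extends[of indep R1 D2] by blast
  have split: "sample_mwis indep w L = R1 @ R2"
    unfolding sample_mwis_def D_def[symmetric] D(1) greedy_list_append R1_def[symmetric] R2(1) ..
  have R1: "indep (set R1)" "set R1 \<subseteq> set D1" "distinct R1"
    using greedy_on_indep[of indep "{}", OF matroid_indep_empty[OF M]]
      greedy_on_subset[of "{}" indep D1] greedy_list_distinct[of "[]" D1 indep] D(1,3)
    by (simp_all add: R1_def set_greedy_list)
  have maximal: "\<forall>y\<in>set D1 - set R1. \<not> indep (insert y (set R1))"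
    unfolding R1_def set_greedy_list using greedy_on_maximal[OF M] by auto
  have "\<forall>I. indep I \<and> I \<subseteq> set L \<and> (\<forall>y\<in>I. P (w y)) \<longrightarrow> card I \<le> length R1"
  proof (intro allI impI)
    fix I assume I: "indep I \<and> I \<subseteq> set L \<and> (\<forall>y\<in>I. P (w y))"
    then have "I \<subseteq> set D1" using D D2_low by auto
    then show "card I \<le> length R1"
      using card_indep_le_maximal[OF M R1(1,2) maximal] I distinct_card[OF R1(3)] by simp
  qed
  moreover have "\<forall>y\<in>set R1. P (w y)" using R1(2) unfolding D1_def by (auto dest: set_takeWhileD)
  ultimately show thesis using that[OF split] R2(2) D2_low by blast
qed

lemma sample_mwis_nth_upper:
  assumes up: "\<And>a b. P a \<Longrightarrow> a \<le> b \<Longrightarrow> P b"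
    and I: "indep I" "I \<subseteq> set L" "\<forall>y\<in>I. P (w y)" and p: "p < card I"
  shows "p < length (sample_mwis indep w L) \<and> P (w (sample_mwis indep w L ! p))"
proof -
  obtain R1 R2 where R: "sample_mwis indep w L = R1 @ R2" "\<forall>y\<in>set R1. P (w y)"
    "\<forall>I. indep I \<and> I \<subseteq> set L \<and> (\<forall>y\<in>I. P (w y)) \<longrightarrow> card I \<le> length R1"
    by (rule sample_mwis_split[OF up])
  have "p < length R1" using R(3) I p by fastforce
  then show ?thesis using R(1,2) by (auto simp: nth_append)
qed

lemma card_indep_le_length_sample_mwis:
  assumes "indep I" "I \<subseteq> set L"
  shows "card I \<le> length (sample_mwis indep w L)"
  using sample_mwis_nth_upper[of "\<lambda>_. True" I "card I - 1"] assms
  by (cases "card I") auto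

lemma sample_mwis_first_heaviest:
  assumes "indep {z}" "z \<in> set L"
  shows "0 < length (sample_mwis indep w L) \<and> w z \<le> w (sample_mwis indep w L ! 0)"
  using sample_mwis_nth_upper[where P = "\<lambda>b. w z \<le> b" and I = "{z}" and p = 0] assms by auto

text \<open>The \<open>j + 1\<close> heaviest elements of an independent set form an independent set.\<close>
lemma sample_mwis_nth_dominates:
  assumes I: "indep I" "I \<subseteq> set L"
    and ys: "distinct ys" "set ys = I" "sorted_wrt (\<lambda>x y. w y < w x) ys" and j: "j < length ys"
  shows "j < length (sample_mwis indep w L) \<and> w (ys ! j) \<le> w (sample_mwis indep w L ! j)"
proof (rule sample_mwis_nth_upper[where P = "\<lambda>b. w (ys ! j) \<le> b"])
  have sub: "set (take (Suc j) ys) \<subseteq> I" using set_take_subset ys(2) by metis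
  show "indep (set (take (Suc j) ys))" using matroid_indep_subset[OF M I(1) sub] .
  show "set (take (Suc j) ys) \<subseteq> set L" using sub I(2) by simp
  show "\<forall>y\<in>set (take (Suc j) ys). w (ys ! j) \<le> w y"
  proof
    fix y assume "y \<in> set (take (Suc j) ys)"
    then obtain i where "i < length (take (Suc j) ys)" "y = take (Suc j) ys ! i"
      by (auto simp: in_set_conv_nth)
    then have "i \<le> j" "y = ys ! i" by auto
    then show "w (ys ! j) \<le> w y"
      using ys(3) j by (cases "i = j") (auto simp: sorted_wrt_iff_nth_less less_imp_le)
  qed
  show "j < card (set (take (Suc j) ys))"
    using j ys(1) by (simp add: distinct_card)
qed auto

end

lemma finite_indep_sets: "matroid E indep \<Longrightarrow> finite {I. indep I}"
  using matroid_indep_subset_ground matroid_finite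
  by (metis (mono_tags) Collect_mono Pow_def finite_Pow_iff finite_subset)

context
  fixes E :: "'a set" and indep and w :: "'a \<Rightarrow> real" and LE :: "'a list"
  assumes M: "matroid E indep" and distinct_LE: "distinct LE" and set_LE: "set LE = E"
    and inj: "inj_on w (set LE)"
begin

lemma length_sample_mwis_ground: "length (sample_mwis indep w LE) = mrank E indep"
proof -
  let ?O = "sample_mwis indep w LE"
  have O: "distinct ?O" "indep (set ?O)"
    using sample_mwis_basic[OF M distinct_LE inj] by auto
  have "length ?O \<in> card ` {I. indep I}"
    using O distinct_card by force
  moreover have "c \<le> length ?O" if "c \<in> card ` {I. indep I}" for c
    using that card_indep_le_length_sample_mwis[OF M distinct_LE inj] set_LE
      matroid_indep_subset_ground[OF M] by auto
  ultimately show ?thesis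
    unfolding mrank_def using finite_indep_sets[OF M] by (intro Max_eqI[symmetric]) auto
qed

lemma opt_weight_le_sum_sample_mwis:
  assumes nonneg: "\<forall>x\<in>E. 0 \<le> w x"
  shows "opt_weight E indep w \<le> (\<Sum>j<mrank E indep. w (sample_mwis indep w LE ! j))"
proof -
  let ?O = "sample_mwis indep w LE"
  have "sum w I \<le> (\<Sum>j<mrank E indep. w (?O ! j))" if I: "indep I" for I
  proof -
    have IE: "I \<subseteq> E" using matroid_indep_subset_ground[OF M I] .
    obtain xs where xs: "distinct xs" "set xs = I"
      using finite_distinct_list[OF matroid_indep_finite[OF M I]] by blast
    define ys where "ys = rev (sort_key w xs)"
    have ys: "distinct ys" "set ys = I" "length ys = card I"
      using xs distinct_card[of ys] by (auto simp: ys_def)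
    have sorted: "sorted_wrt (\<lambda>x y. w y < w x) ys"
      unfolding ys_def using sorted_wrt_decreasing_rev_sort_key xs inj IE set_LE inj_on_subset
      by metis
    have "I \<subseteq> set LE" using IE set_LE by simp
    note dominated = sample_mwis_nth_dominates[OF M distinct_LE inj I this ys(1,2) sorted]
    have "card I \<le> mrank E indep"
      using card_indep_le_length_sample_mwis[OF M distinct_LE inj] I IE set_LE
        length_sample_mwis_ground by auto
    have "sum w I = sum_list (map w ys)"
      using ys by (simp add: sum_list_distinct_conv_sum_set)
    also have "\<dots> = (\<Sum>j<length ys. w (ys ! j))"
      by (simp add: sum_list_sum_nth atLeast0LessThan)
    also have "\<dots> \<le> (\<Sum>j<length ys. w (?O ! j))"
      using dominated by (intro sum_mono) auto
    also have "\<dots> \<le> (\<Sum>j<mrank E indep. w (?O ! j))"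
    proof (rule sum_mono2)
      show "{..<length ys} \<subseteq> {..<mrank E indep}" using ys \<open>card I \<le> mrank E indep\<close> by auto
      show "0 \<le> w (?O ! j)" if "j \<in> {..<mrank E indep} - {..<length ys}" for j
        using that nonneg sample_mwis_basic(1)[OF M distinct_LE inj] set_LE
          length_sample_mwis_ground nth_mem by (metis Diff_iff lessThan_iff subsetD)
    qed simp
    finally show ?thesis .
  qed
  then show ?thesis
    unfolding opt_weight_def using finite_indep_sets[OF M] matroid_indep_empty[OF M]
    by (subst Max_le_iff) auto
qed

end

section \<open>Ternary blocks\<close>

lemma flog3_bounds:
  assumes "1 \<le> k"
  shows "3 ^ flog3 k \<le> k \<and> k < 3 ^ (flog3 k + 1)"
proof -
  have "\<lfloor>log (real (3::nat)) (real k)\<rfloor> = int (flog3 k)"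
    using assms unfolding flog3_def by simp
  then show ?thesis
    using floor_log_nat_eq_powr_iff[of 3 k "flog3 k"] assms by simp
qed

lemma le_flog3I: "3 ^ i \<le> k \<Longrightarrow> i \<le> flog3 k"
proof -
  assume le: "3 ^ i \<le> k"
  then have k: "1 \<le> k" using one_le_power[of "3::nat" i] by linarith
  have lt: "(3::nat) ^ i < 3 ^ (flog3 k + 1)" using le flog3_bounds[OF k] by linarith
  have "i < flog3 k + 1" using power_less_imp_less_exp[of "3::nat", OF _ lt] by simp
  then show ?thesis by simp
qed

lemma flog3_mono:
  assumes "k \<le> r" shows "flog3 k \<le> flog3 r"
proof (cases "k = 0")
  case True
  then show ?thesis by (simp add: flog3_def log_def)
next
  case False
  then show ?thesis using flog3_bounds[of k] assms by (intro le_flog3I) simp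
qed

lemma flog3_le_ln: "1 \<le> r \<Longrightarrow> real (flog3 r) \<le> ln (real r)"
proof -
  assume r: "1 \<le> r"
  have "(3::real) ^ flog3 r \<le> real r"
    using flog3_bounds[OF r] by (metis of_nat_le_iff of_nat_numeral of_nat_power)
  then have "real (flog3 r) * ln 3 \<le> ln (real r)"
    using r by (simp add: ln_realpow[symmetric])
  moreover have "1 \<le> ln (3::real)"
    using exp_le ln_le_cancel_iff[of "exp 1" 3] by simp
  ultimately show ?thesis
    by (metis mult.right_neutral mult_left_mono of_nat_0_le_iff order_trans)
qed

lemma ternary_block_bounds:
  "3 ^ (flog3 (j + 3) - 1 + 1) \<le> j + 3 \<and> j + 3 < 3 ^ (flog3 (j + 3) - 1 + 2)"
proof -
  have "1 \<le> flog3 (j + 3)" using le_flog3I[of 1 "j + 3"] by simp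
  then show ?thesis using flog3_bounds[of "j + 3"] by simp
qed

lemma card_ternary_block: "card {j\<in>{..<K}. flog3 (j + 3) - 1 = i} \<le> 6 * 3 ^ i"
proof -
  have "{j\<in>{..<K}. flog3 (j + 3) - 1 = i} \<subseteq> {3^(i+1) - 3 ..< 3^(i+2) - 3}"
  proof
    fix j assume "j \<in> {j\<in>{..<K}. flog3 (j + 3) - 1 = i}"
    then show "j \<in> {3^(i+1) - 3 ..< 3^(i+2) - 3}" using ternary_block_bounds[of j] by auto
  qed
  then have "card {j\<in>{..<K}. flog3 (j + 3) - 1 = i} \<le> card {3^(i+1) - 3 ..< (3::nat)^(i+2) - 3}"
    by (intro card_mono) simp_all
  also have "\<dots> = 6 * 3 ^ i" by (simp add: power_add)
  finally show ?thesis .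
qed

text \<open>Index \<open>j\<close> lies in the block \<open>[3^(i+1) - 3, 3^(i+2) - 3)\<close> with \<open>i = flog3 (j + 3) - 1\<close>;
  each block has \<open>6 * 3^i\<close> indices, all of weight at most that of its first index.\<close>
lemma sum_decreasing_le_ternary_blocks:
  fixes W :: "nat \<Rightarrow> real"
  assumes K: "1 \<le> K" and nonneg: "\<And>j. j < K \<Longrightarrow> 0 \<le> W j"
    and decreasing: "\<And>j j'. j \<le> j' \<Longrightarrow> j' < K \<Longrightarrow> W j' \<le> W j"
  shows "(\<Sum>j<K. W j)
    \<le> (\<Sum>i\<le>flog3 K. if 3^(i+1) - 3 < K then 6 * 3^i * W (3^(i+1) - 3) else 0)"
proof -
  define b where "b j = flog3 (j + 3) - 1" for j
  define start where "start i = (3::nat)^(i+1) - 3" for i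
  have start_le: "start (b j) \<le> j" for j
    using ternary_block_bounds[of j] unfolding start_def b_def by linarith
  have b_le: "b j \<le> flog3 K" if "j < K" for j
    using ternary_block_bounds[of j] that K unfolding b_def by (intro le_flog3I) simp
  have "(\<Sum>j<K. W j) \<le> (\<Sum>j<K. W (start (b j)))"
    by (rule sum_mono) (use decreasing start_le in auto)
  also have "\<dots> = (\<Sum>i\<le>flog3 K. \<Sum>j\<in>{j\<in>{..<K}. b j = i}. W (start (b j)))"
  proof (rule sum.group[symmetric])
    show "b ` {..<K} \<subseteq> {..flog3 K}" using b_le by blast
  qed simp_all
  also have "\<dots> = (\<Sum>i\<le>flog3 K. real (card {j\<in>{..<K}. b j = i}) * W (start i))"
    by (rule sum.cong) simp_all
  also have "\<dots> \<le> (\<Sum>i\<le>flog3 K. if start i < K then 6 * 3^i * W (start i) else 0)"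
  proof (rule sum_mono)
    fix i
    show "real (card {j\<in>{..<K}. b j = i}) * W (start i)
      \<le> (if start i < K then 6 * 3^i * W (start i) else 0)"
    proof (cases "start i < K")
      case True
      have "real (card {j\<in>{..<K}. b j = i}) \<le> real (6 * 3 ^ i)"
        using card_ternary_block unfolding b_def by (rule of_nat_mono)
      then show ?thesis using True nonneg[of "start i"] by (simp add: mult_right_mono)
    next
      case False
      have empty: "{j\<in>{..<K}. b j = i} = {}"
      proof (rule ccontr)
        assume "{j\<in>{..<K}. b j = i} \<noteq> {}"
        then obtain j where "j < K" "b j = i" by blast
        then show False using start_le[of j] False by simp
      qed
      show ?thesis unfolding empty using False by simp
    qed
  qed
  finally show ?thesis unfolding start_def .
qed

lemma prefix_sum_div_le_mean:
  fixes V :: "nat \<Rightarrow> real"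
  assumes "\<And>i. 0 \<le> V i" "s \<le> t" "t \<le> F + 1"
  shows "(\<Sum>i\<le>s. V i) / (real F + 2) \<le> (\<Sum>i\<in>{0..t}. V i) / real (t + 1)"
proof -
  have "(\<Sum>i\<le>s. V i) \<le> (\<Sum>i\<le>t. V i)"
    using assms by (intro sum_mono2) auto
  then have "(\<Sum>i\<le>s. V i) / (real F + 2) \<le> (\<Sum>i\<le>t. V i) / (real F + 2)"
    by (simp add: divide_right_mono)
  also have "\<dots> \<le> (\<Sum>i\<le>t. V i) / real (t + 1)"
    using assms by (intro divide_left_mono sum_nonneg) auto
  finally show ?thesis by (simp add: atLeast0AtMost)
qed

section \<open>Random orders, random subsets and expectations\<close>

lemma set_drop_permutation:
  assumes "\<sigma> \<in> permutations_of_set E"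
  shows "set (drop m \<sigma>) = E - set (take m \<sigma>)"
proof -
  have "distinct (take m \<sigma> @ drop m \<sigma>)" "set (take m \<sigma> @ drop m \<sigma>) = E"
    using assms by (auto simp: permutations_of_set_def)
  then show ?thesis by (auto simp del: append_take_drop_id)
qed

text \<open>A permutation with prefix set \<open>S\<close> is a permutation of \<open>S\<close> followed by one of \<open>E - S\<close>.\<close>
lemma card_permutations_take_eq:
  assumes E: "finite E" and S: "S \<subseteq> E" "card S = m"
  shows "card {\<sigma>\<in>permutations_of_set E. set (take m \<sigma>) = S} = fact m * fact (card E - m)"
proof -
  let ?A = "permutations_of_set S \<times> permutations_of_set (E - S)"
  have length: "length a = m" if "a \<in> permutations_of_set S" for a
    using that S(2) by (auto simp: permutations_of_set_def distinct_card[symmetric])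
  have "inj_on (\<lambda>(a, b). a @ b) ?A"
    using length by (auto intro!: inj_onI)
  moreover have "(\<lambda>(a, b). a @ b) ` ?A = {\<sigma>\<in>permutations_of_set E. set (take m \<sigma>) = S}"
  proof (intro equalityI subsetI)
    fix \<sigma> assume "\<sigma> \<in> (\<lambda>(a, b). a @ b) ` ?A"
    then obtain a b where "\<sigma> = a @ b" "a \<in> permutations_of_set S" "b \<in> permutations_of_set (E - S)"
      by auto
    then show "\<sigma> \<in> {\<sigma>\<in>permutations_of_set E. set (take m \<sigma>) = S}"
      using length S(1) by (auto simp: permutations_of_set_def)
  next
    fix \<sigma> assume \<sigma>: "\<sigma> \<in> {\<sigma>\<in>permutations_of_set E. set (take m \<sigma>) = S}"
    then have "(take m \<sigma>, drop m \<sigma>) \<in> ?A"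
      using set_drop_permutation[of \<sigma> E m] by (auto simp: permutations_of_set_def)
    then show "\<sigma> \<in> (\<lambda>(a, b). a @ b) ` ?A"
      by (metis (no_types, lifting) append_take_drop_id case_prod_conv image_eqI)
  qed
  ultimately have "card {\<sigma>\<in>permutations_of_set E. set (take m \<sigma>) = S} = card ?A"
    using card_image by fastforce
  also have "\<dots> = fact m * fact (card E - m)"
    using E S finite_subset[OF S(1) E] by (simp add: card_cartesian_product card_Diff_subset)
  finally show ?thesis .
qed

lemma sum_permutations_take:
  fixes f :: "'a set \<Rightarrow> real"
  assumes E: "finite E" and m: "m \<le> card E"
  shows "(\<Sum>\<sigma>\<in>permutations_of_set E. f (set (take m \<sigma>)))
    = fact m * fact (card E - m) * (\<Sum>S\<in>{S\<in>Pow E. card S = m}. f S)"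
proof -
  have "set (take m \<sigma>) \<in> {S\<in>Pow E. card S = m}" if "\<sigma> \<in> permutations_of_set E" for \<sigma>
  proof -
    have "distinct \<sigma>" "set \<sigma> = E" using that by (auto simp: permutations_of_set_def)
    moreover from this have "length \<sigma> = card E" by (metis distinct_card)
    ultimately show ?thesis using m by (auto simp: distinct_card dest: in_set_takeD)
  qed
  then have "(\<Sum>\<sigma>\<in>permutations_of_set E. f (set (take m \<sigma>)))
      = (\<Sum>S\<in>{S\<in>Pow E. card S = m}.
          \<Sum>\<sigma>\<in>{\<sigma>\<in>permutations_of_set E. set (take m \<sigma>) = S}. f (set (take m \<sigma>)))"
    using E by (intro sum.group[symmetric]) auto
  also have "\<dots> = (\<Sum>S\<in>{S\<in>Pow E. card S = m}.
      \<Sum>\<sigma>\<in>{\<sigma>\<in>permutations_of_set E. set (take m \<sigma>) = S}. f S)"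
    by (intro sum.cong) auto
  also have "\<dots> = (\<Sum>S\<in>{S\<in>Pow E. card S = m}. real (fact m * fact (card E - m)) * f S)"
    using card_permutations_take_eq[OF E] by (intro sum.cong) auto
  finally show ?thesis by (simp add: sum_distrib_left)
qed

text \<open>Taking the first \<open>m \<sim> Bin(n, 1/2)\<close> elements of a uniformly random permutation gives a
  uniformly random subset.\<close>
lemma sum_binomial_permutations_take:
  fixes f :: "'a set \<Rightarrow> real"
  assumes E: "finite E"
  shows "(\<Sum>m\<le>card E. real (card E choose m) * (\<Sum>\<sigma>\<in>permutations_of_set E. f (set (take m \<sigma>))))
         = fact (card E) * (\<Sum>S\<in>Pow E. f S)"
proof -
  define n where "n = card E"
  have "real (n choose m) * (fact m * fact (n - m)) = fact n" if "m \<le> n" for m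
    using binomial_fact_lemma[OF that] by (metis mult.commute of_nat_fact of_nat_mult)
  then have "(\<Sum>m\<le>n. real (n choose m) * (\<Sum>\<sigma>\<in>permutations_of_set E. f (set (take m \<sigma>))))
      = (\<Sum>m\<le>n. fact n * (\<Sum>S\<in>{S\<in>Pow E. card S = m}. f S))"
    using sum_permutations_take[OF E] unfolding n_def by (intro sum.cong) (simp_all add: mult.assoc)
  also have "\<dots> = fact n * (\<Sum>m\<le>n. \<Sum>S\<in>{S\<in>Pow E. card S = m}. f S)"
    by (simp add: sum_distrib_left)
  also have "(\<Sum>m\<le>n. \<Sum>S\<in>{S\<in>Pow E. card S = m}. f S) = (\<Sum>S\<in>Pow E. f S)"
  proof (rule sum.group)
    show "card ` Pow E \<subseteq> {..n}" unfolding n_def using E by (auto intro: card_mono)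
  qed (use E in simp_all)
  finally show ?thesis unfolding n_def .
qed

lemma card_Pow_Un_split:
  assumes "finite A" "finite B" "A \<inter> B = {}"
  shows "card {T\<in>Pow (A \<union> B). P (T \<inter> A) \<and> Q (T \<inter> B)} = card {U\<in>Pow A. P U} * card {V\<in>Pow B. Q V}"
proof -
  have "bij_betw (\<lambda>(U, V). U \<union> V) ({U\<in>Pow A. P U} \<times> {V\<in>Pow B. Q V})
      {T\<in>Pow (A \<union> B). P (T \<inter> A) \<and> Q (T \<inter> B)}"
  proof (rule bij_betw_byWitness[where f' = "\<lambda>T. (T \<inter> A, T \<inter> B)"])
    show "(\<lambda>(U, V). U \<union> V) ` ({U\<in>Pow A. P U} \<times> {V\<in>Pow B. Q V})
        \<subseteq> {T\<in>Pow (A \<union> B). P (T \<inter> A) \<and> Q (T \<inter> B)}"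
    proof
      fix T assume "T \<in> (\<lambda>(U, V). U \<union> V) ` ({U\<in>Pow A. P U} \<times> {V\<in>Pow B. Q V})"
      then obtain U V where UV: "T = U \<union> V" "U \<subseteq> A" "V \<subseteq> B" "P U" "Q V" by auto
      moreover from UV have "T \<inter> A = U" "T \<inter> B = V" using assms(3) by auto
      ultimately show "T \<in> {T\<in>Pow (A \<union> B). P (T \<inter> A) \<and> Q (T \<inter> B)}" by auto
    qed
  qed (use assms(3) in auto)
  then show ?thesis by (simp add: bij_betw_same_card[symmetric] card_cartesian_product)
qed

lemma card_Pow_restrict:
  assumes "finite E" "D \<subseteq> E"
  shows "card {S\<in>Pow E. P (S \<inter> D)} = card {T\<in>Pow D. P T} * 2 ^ (card E - card D)"
proof -
  have "{S\<in>Pow E. P (S \<inter> D)} = {T\<in>Pow (D \<union> (E - D)). P (T \<inter> D) \<and> True}"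
    using assms(2) by (metis Un_Diff_cancel2 sup.absorb_iff1 sup_commute)
  also have "card \<dots> = card {U\<in>Pow D. P U} * card {V\<in>Pow (E - D). True}"
    using assms finite_subset by (intro card_Pow_Un_split) auto
  also have "card {V\<in>Pow (E - D). True} = 2 ^ (card E - card D)"
  proof -
    have "{V\<in>Pow (E - D). True} = Pow (E - D)" by blast
    then show ?thesis
      using assms by (simp add: card_Pow card_Diff_subset finite_subset)
  qed
  finally show ?thesis .
qed

text \<open>If the complement of every subset failing \<open>P\<close> satisfies \<open>P\<close>, then complementation
  injects the failures into the successes.\<close>
lemma card_Pow_half:
  assumes A: "finite A" and complement: "\<And>U. U \<subseteq> A \<Longrightarrow> \<not> P U \<Longrightarrow> P (A - U)"
  shows "2 ^ card A \<le> 2 * card {U\<in>Pow A. P U}"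
proof -
  have inj: "inj_on (\<lambda>U. A - U) {U\<in>Pow A. \<not> P U}" by (rule inj_onI) auto
  have "(\<lambda>U. A - U) ` {U\<in>Pow A. \<not> P U} \<subseteq> {U\<in>Pow A. P U}" using complement by auto
  then have "card {U\<in>Pow A. \<not> P U} \<le> card {U\<in>Pow A. P U}"
    using card_inj_on_le[OF inj] A by auto
  moreover have "card (Pow A) = card {U\<in>Pow A. P U} + card {U\<in>Pow A. \<not> P U}"
  proof -
    have "Pow A = {U\<in>Pow A. P U} \<union> {U\<in>Pow A. \<not> P U}" by auto
    then show ?thesis using A by (metis (no_types, lifting) card_Un_disjoint finite_Pow_iff
          finite_Un disjoint_iff mem_Collect_eq)
  qed
  ultimately show ?thesis using card_Pow[OF A] by linarith
qed

lemma card_Pow_two_halves: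
  assumes E: "finite E" and AB: "A \<subseteq> E" "B \<subseteq> E" "A \<inter> B = {}"
    and P: "\<And>U. U \<subseteq> A \<Longrightarrow> \<not> P U \<Longrightarrow> P (A - U)"
    and Q: "\<And>V. V \<subseteq> B \<Longrightarrow> \<not> Q V \<Longrightarrow> Q (B - V)"
    and R: "\<And>S. S \<subseteq> E \<Longrightarrow> P (S \<inter> A) \<Longrightarrow> Q (S \<inter> B) \<Longrightarrow> R S"
  shows "2 ^ card E \<le> 4 * card {S\<in>Pow E. R S}"
proof -
  have fin: "finite A" "finite B" using AB E finite_subset by blast+
  have "S \<inter> (A \<union> B) \<inter> A = S \<inter> A \<and> S \<inter> (A \<union> B) \<inter> B = S \<inter> B" for S by blast
  then have "card {S\<in>Pow E. P (S \<inter> A) \<and> Q (S \<inter> B)}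
      = card {S\<in>Pow E. (\<lambda>T. P (T \<inter> A) \<and> Q (T \<inter> B)) (S \<inter> (A \<union> B))}"
    by simp
  also have "\<dots> = card {T\<in>Pow (A \<union> B). P (T \<inter> A) \<and> Q (T \<inter> B)} * 2 ^ (card E - card (A \<union> B))"
    using AB by (intro card_Pow_restrict[OF E]) auto
  also have "\<dots> = card {U\<in>Pow A. P U} * card {V\<in>Pow B. Q V} * 2 ^ (card E - card (A \<union> B))"
    using card_Pow_Un_split[OF fin AB(3)] by simp
  finally have count: "card {S\<in>Pow E. P (S \<inter> A) \<and> Q (S \<inter> B)}
      = card {U\<in>Pow A. P U} * card {V\<in>Pow B. Q V} * 2 ^ (card E - card (A \<union> B))" .
  have "card (A \<union> B) = card A + card B" using fin AB(3) by (rule card_Un_disjoint)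
  moreover have "card (A \<union> B) \<le> card E" using AB E by (intro card_mono) auto
  ultimately have "(2::nat) ^ card E = 2 ^ card A * 2 ^ card B * 2 ^ (card E - card (A \<union> B))"
    by (simp add: power_add[symmetric])
  also have "\<dots> \<le> (2 * card {U\<in>Pow A. P U}) * (2 * card {V\<in>Pow B. Q V})
      * 2 ^ (card E - card (A \<union> B))"
    using card_Pow_half[of A P, OF fin(1) P] card_Pow_half[of B Q, OF fin(2) Q]
    by (intro mult_mono) auto
  also have "\<dots> = 4 * card {S\<in>Pow E. P (S \<inter> A) \<and> Q (S \<inter> B)}" unfolding count by simp
  also have "\<dots> \<le> 4 * card {S\<in>Pow E. R S}" using R E by (intro mult_le_mono2 card_mono) auto
  finally show ?thesis .
qed

lemma expectation_bind_pmf: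
  fixes g :: "'b \<Rightarrow> real"
  assumes "\<And>y. \<bar>g y\<bar> \<le> B"
  shows "measure_pmf.expectation (bind_pmf p f) g
    = measure_pmf.expectation p (\<lambda>x. measure_pmf.expectation (f x) g)"
  unfolding measure_pmf_bind
proof (rule integral_bind[where K = "count_space UNIV" and B = B and B' = 1])
  show "(\<lambda>x. measure_pmf (f x)) \<in> measurable (measure_pmf p) (subprob_algebra (count_space UNIV))"
    by (simp add: measure_pmf_in_subprob_algebra)
qed (simp_all add: assms measure_pmf.finite_measure_axioms measure_pmf.emeasure_space_1)

lemma expectation_binomial_pmf_half:
  "measure_pmf.expectation (binomial_pmf n (1/2)) (g :: nat \<Rightarrow> real)
    = (\<Sum>m\<le>n. real (n choose m) * g m) / 2 ^ n"
proof -
  have "pmf (binomial_pmf n (1/2)) m = real (n choose m) / 2 ^ n" if "m \<le> n" for m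
    using that by (simp add: power_add[symmetric] power_divide)
  then have "measure_pmf.expectation (binomial_pmf n (1/2)) g
      = (\<Sum>m\<le>n. real (n choose m) / 2 ^ n * g m)"
    by (subst integral_measure_pmf_real[where A = "{..n}"]) (auto simp: mult.commute)
  then show ?thesis by (simp add: sum_divide_distrib)
qed

section \<open>Analysis of the algorithm\<close>

text \<open>\<open>LE\<close> enumerates \<open>E\<close>, so that the optimum \<open>opt\<close> is computed by the same greedy procedure
  as the optimum of a sample.\<close>
locale secretary_instance =
  fixes E :: "'a set" and indep and w :: "'a \<Rightarrow> real" and LE :: "'a list"
  assumes matroid: "matroid E indep" and distinct_LE: "distinct LE" and set_LE: "set LE = E"
    and inj: "inj_on w E" and nonneg: "\<forall>x\<in>E. 0 \<le> w x" and rank_pos: "1 \<le> mrank E indep"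
begin

abbreviation "r \<equiv> mrank E indep"

definition opt :: "'a list" where "opt = sample_mwis indep w LE"

abbreviation "wopt j \<equiv> w (opt ! j)"

text \<open>For \<open>l = 3^i\<close> with \<open>i \<ge> 1\<close> the good event asks that at least \<open>3^i\<close> of the \<open>2 * 3^i - 1\<close>
  elements of \<open>middle_block i\<close> are sampled and at least half of the \<open>3^i - 1\<close> elements
  of \<open>top_block i\<close> are not: then the threshold \<open>a\<^sub>l\<close> lies between the two blocks, and the
  greedy phase collects the unsampled part of the top block, of weight \<open>gain i\<close> or more.
  For \<open>l = 1\<close> it asks that the heaviest non-loop \<open>opt ! 0\<close> is unsampled while every other
  non-loop is outweighed by a sampled non-loop, so that \<open>opt ! 0\<close> is the only non-loop the
  greedy phase can take.\<close>
definition middle_block :: "nat \<Rightarrow> 'a set" where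
  "middle_block i = (\<lambda>j. opt ! j) ` {3^i - 1 ..< 3 * 3^i - 2}"

definition top_block :: "nat \<Rightarrow> 'a set" where
  "top_block i = (\<lambda>j. opt ! j) ` {..< 3^i - 1}"

definition good :: "nat \<Rightarrow> 'a set \<Rightarrow> bool" where
  "good i S = (if i = 0
     then opt ! 0 \<notin> S \<and> (\<forall>y\<in>E. indep {y} \<and> y \<noteq> opt ! 0 \<longrightarrow>
            (\<exists>z\<in>S. indep {z} \<and> z \<noteq> opt ! 0 \<and> w y \<le> w z))
     else 3 * 3^i - 2 \<le> r \<and> 3^i \<le> card (S \<inter> middle_block i)
       \<and> 3^i - 1 \<le> 2 * card (top_block i - S))"

definition gain :: "nat \<Rightarrow> real" where
  "gain i = (if i = 0 then wopt 0
     else if 3 * 3^i - 2 \<le> r then (3^i - 1) / 2 * wopt (3 * 3^i - 3) else 0)"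

lemma finite_ground: "finite E"
  using matroid_finite[OF matroid] .

lemma inj_LE: "inj_on w (set LE)"
  using inj set_LE by simp

lemma opt_props:
  "set opt \<subseteq> E" "distinct opt" "indep (set opt)" "sorted_wrt (\<lambda>x y. w y < w x) opt"
  "length opt = r"
  using sample_mwis_basic[OF matroid distinct_LE inj_LE] set_LE
    length_sample_mwis_ground[OF matroid distinct_LE set_LE inj_LE]
  unfolding opt_def by auto

lemma opt_nth_ground: "j < r \<Longrightarrow> opt ! j \<in> E"
  using opt_props nth_mem by (metis subsetD)

lemma wopt_nonneg: "j < r \<Longrightarrow> 0 \<le> wopt j"
  using opt_nth_ground nonneg by blast

lemma wopt_antimono: "j \<le> j' \<Longrightarrow> j' < r \<Longrightarrow> wopt j' \<le> wopt j"
  using opt_props(4,5) by (cases "j = j'") (auto simp: sorted_wrt_iff_nth_less less_imp_le)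

lemma gain_nonneg: "0 \<le> gain i"
  using wopt_nonneg rank_pos by (auto simp: gain_def intro!: mult_nonneg_nonneg)

lemma heaviest_nonloop: "x \<in> E \<Longrightarrow> indep {x} \<Longrightarrow> w x \<le> wopt 0"
  using sample_mwis_first_heaviest[OF matroid distinct_LE inj_LE] set_LE unfolding opt_def by blast

lemma sample_props:
  assumes "\<sigma> \<in> permutations_of_set E"
  shows "distinct (take m \<sigma>)" "set (take m \<sigma>) \<subseteq> E" "inj_on w (set (take m \<sigma>))"
proof -
  show "distinct (take m \<sigma>)" "set (take m \<sigma>) \<subseteq> E"
    using assms by (auto simp: permutations_of_set_def dest: in_set_takeD)
  then show "inj_on w (set (take m \<sigma>))" using inj inj_on_subset by blast
qed

lemma length_sample_mwis_le_rank:
  assumes "\<sigma> \<in> permutations_of_set E"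
  shows "length (sample_mwis indep w (take m \<sigma>)) \<le> r"
proof -
  let ?A = "sample_mwis indep w (take m \<sigma>)"
  have "set ?A \<subseteq> E" "indep (set ?A)" "distinct ?A"
    using sample_mwis_basic[OF matroid sample_props(1,3)[OF assms, of m]]
      sample_props(2)[OF assms, of m] by auto
  then show ?thesis
    using card_indep_le_length_sample_mwis[OF matroid distinct_LE inj_LE, of "set ?A"] set_LE
      length_sample_mwis_ground[OF matroid distinct_LE set_LE inj_LE] distinct_card
    by fastforce
qed

lemma threshold_greedy_subset:
  assumes "\<sigma> \<in> permutations_of_set E"
  shows "threshold_greedy indep w \<sigma> m l \<subseteq> E"
  using greedy_on_subset[of "{}" indep] set_drop_permutation[OF assms]
  unfolding threshold_greedy_def Let_def by fastforce

lemma threshold_greedy_eq: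
  "threshold_greedy indep w \<sigma> m l = greedy_on indep {}
     (filter (\<lambda>x. length (sample_mwis indep w (take m \<sigma>)) < l
        \<or> w (sample_mwis indep w (take m \<sigma>) ! (l - 1)) < w x) (drop m \<sigma>))"
  unfolding threshold_greedy_def Let_def ..

lemma gain_zero_le_threshold_greedy:
  assumes \<sigma>: "\<sigma> \<in> permutations_of_set E" and good: "good 0 (set (take m \<sigma>))"
  shows "gain 0 \<le> sum w (threshold_greedy indep w \<sigma> m 1)"
proof -
  define S where "S = set (take m \<sigma>)"
  define A where "A = sample_mwis indep w (take m \<sigma>)"
  define xs where "xs = filter (\<lambda>x. length A < 1 \<or> w (A ! 0) < w x) (drop m \<sigma>)"
  define b where "b = opt ! 0"
  note sample = sample_props[OF \<sigma>, of m]
  have unsampled: "set (drop m \<sigma>) = E - S" using set_drop_permutation[OF \<sigma>] S_def by simp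
  have b: "b \<in> E" "indep {b}"
    using opt_nth_ground opt_props(3,5) rank_pos matroid_indep_subset[OF matroid]
    unfolding b_def by (simp_all add: nth_mem)
  have b_out: "b \<notin> S" and dominated: "\<forall>y\<in>E. indep {y} \<and> y \<noteq> b \<longrightarrow> (\<exists>z\<in>S. indep {z} \<and> w y \<le> w z)"
    using good unfolding good_def S_def b_def by auto
  have only_b: "x = b" if x: "x \<in> set xs" "indep {x}" for x
  proof (rule ccontr)
    assume "x \<noteq> b"
    then obtain z where "z \<in> S" "indep {z}" "w x \<le> w z"
      using dominated x unsampled unfolding xs_def by auto
    then show False
      using sample_mwis_first_heaviest[OF matroid sample(1,3), of z] x(1)
      unfolding xs_def A_def S_def by auto
  qed
  have "b \<in> set xs"
  proof (cases "length A = 0")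
    case True
    then show ?thesis using unsampled b b_out unfolding xs_def by auto
  next
    case False
    have a: "A ! 0 \<in> S" "indep {A ! 0}"
      using sample_mwis_basic[OF matroid sample(1,3)] matroid_indep_subset[OF matroid] False
      unfolding A_def S_def by (auto dest: nth_mem)
    moreover have "A ! 0 \<in> E" using a(1) sample(2) unfolding S_def by blast
    ultimately have "w (A ! 0) \<le> w b" using heaviest_nonloop unfolding b_def by blast
    moreover have "w (A ! 0) \<noteq> w b"
      using a(1) \<open>A ! 0 \<in> E\<close> b(1) b_out inj by (metis inj_on_contraD)
    ultimately show ?thesis using unsampled b b_out unfolding xs_def by auto
  qed
  moreover have "\<forall>x\<in>set xs. indep {x} \<longrightarrow> w b \<le> w x" using only_b by blast
  ultimately have "real (card {b}) * w b \<le> sum w (greedy_on indep {} xs)"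
    using wopt_nonneg[of 0] rank_pos b(2) unfolding b_def
    by (intro greedy_on_weight_ge[OF matroid]) simp_all
  then show ?thesis unfolding threshold_greedy_eq gain_def xs_def A_def b_def by simp
qed

lemma blocks_subset_opt:
  assumes "3 * 3^i - 2 \<le> r"
  shows "middle_block i \<subseteq> set opt" "top_block i \<subseteq> set opt"
  using assms opt_props(5) unfolding middle_block_def top_block_def by auto

lemma good_threshold:
  assumes \<sigma>: "\<sigma> \<in> permutations_of_set E" and good: "good i (set (take m \<sigma>))" and i: "1 \<le> i"
  defines "A \<equiv> sample_mwis indep w (take m \<sigma>)" and "q \<equiv> 3 ^ i"
  shows "q \<le> length A" "wopt (3 * q - 3) \<le> w (A ! (q - 1))" "w (A ! (q - 1)) < wopt (q - 2)"
proof -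
  define S where "S = set (take m \<sigma>)"
  note sample = sample_props[OF \<sigma>, of m]
  have q: "3 \<le> q" unfolding q_def using power_increasing[OF i, of "3::nat"] by simp
  have r: "3 * q - 2 \<le> r" and middle: "q \<le> card (S \<inter> middle_block i)"
    using good i unfolding good_def S_def q_def by auto
  have "\<forall>y\<in>S \<inter> middle_block i. wopt (3 * q - 3) \<le> w y"
    using wopt_antimono r unfolding middle_block_def q_def[symmetric] by auto
  moreover have "indep (S \<inter> middle_block i)"
    using matroid_indep_subset[OF matroid opt_props(3)] blocks_subset_opt(1)[of i] r
    unfolding q_def by (meson Int_lower2 order_trans)
  ultimately have "q - 1 < length A \<and> wopt (3 * q - 3) \<le> w (A ! (q - 1))"
    using sample_mwis_nth_upper[OF matroid sample(1,3), where P = "\<lambda>b. wopt (3 * q - 3) \<le> b"]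
      middle q unfolding A_def S_def by auto
  then show "q \<le> length A" "wopt (3 * q - 3) \<le> w (A ! (q - 1))" by auto
  let ?T = "set (take (q - 1) A)"
  have A: "set A \<subseteq> S" "distinct A" "indep (set A)" "sorted_wrt (\<lambda>x y. w y < w x) A"
    using sample_mwis_basic[OF matroid sample(1,3)] unfolding A_def S_def by auto
  have "?T \<subseteq> set A" by (rule set_take_subset)
  then have "indep ?T" "?T \<subseteq> set LE" "card ?T = q - 1"
    using matroid_indep_subset[OF matroid A(3)] A(1,2) sample(2) set_LE \<open>q \<le> length A\<close>
    unfolding S_def by (auto simp: distinct_card)
  moreover have "\<forall>y\<in>?T. w (A ! (q - 1)) < w y"
    using A(4) \<open>q \<le> length A\<close> by (auto simp: in_set_conv_nth sorted_wrt_iff_nth_less)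
  ultimately show "w (A ! (q - 1)) < wopt (q - 2)"
    using sample_mwis_nth_upper[OF matroid distinct_LE inj_LE, where P = "\<lambda>b. w (A ! (q - 1)) < b"
        and I = ?T and p = "q - 2"] q unfolding opt_def by auto
qed

lemma gain_le_threshold_greedy:
  assumes \<sigma>: "\<sigma> \<in> permutations_of_set E" and good: "good i (set (take m \<sigma>))" and i: "1 \<le> i"
  shows "gain i \<le> sum w (threshold_greedy indep w \<sigma> m (3 ^ i))"
proof -
  define S where "S = set (take m \<sigma>)"
  define A where "A = sample_mwis indep w (take m \<sigma>)"
  define q :: nat where "q = 3 ^ i"
  define a where "a = w (A ! (q - 1))"
  define xs where "xs = filter (\<lambda>x. length A < q \<or> a < w x) (drop m \<sigma>)"
  have q: "3 \<le> q" unfolding q_def using power_increasing[OF i, of "3::nat"] by simp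
  have r: "3 * q - 2 \<le> r" and top: "q - 1 \<le> 2 * card (top_block i - S)"
    using good i unfolding good_def S_def q_def by auto
  note threshold = good_threshold[OF \<sigma> good i, folded A_def q_def a_def]
  have "top_block i - S \<subseteq> set xs"
  proof
    fix y assume y: "y \<in> top_block i - S"
    then obtain j where j: "y = opt ! j" "j < q - 1" unfolding top_block_def q_def by auto
    have "wopt (q - 2) \<le> wopt j" using wopt_antimono[of j "q - 2"] j(2) r q by simp
    then have "a < w y" using threshold(3) j(1) unfolding a_def by simp
    moreover have "y \<in> E" using j r opt_nth_ground by simp
    ultimately show "y \<in> set xs"
      using y set_drop_permutation[OF \<sigma>] unfolding xs_def S_def by simp
  qed
  moreover have "indep (top_block i - S)"
    using matroid_indep_subset[OF matroid opt_props(3)] blocks_subset_opt(2)[of i] r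
    unfolding q_def by (meson Diff_subset order_trans)
  moreover have "\<forall>x\<in>set xs. wopt (3 * q - 3) \<le> w x"
    using threshold(1,2) unfolding xs_def a_def by fastforce
  ultimately have "real (card (top_block i - S)) * wopt (3 * q - 3) \<le> sum w (greedy_on indep {} xs)"
    using wopt_nonneg r q by (intro greedy_on_weight_ge[OF matroid]) auto
  moreover have "(real q - 1) / 2 \<le> real (card (top_block i - S))"
  proof -
    have "real (q - 1) \<le> real (2 * card (top_block i - S))" using top by (rule of_nat_mono)
    then show ?thesis using q by (simp add: of_nat_diff)
  qed
  moreover have "0 \<le> wopt (3 * q - 3)" using wopt_nonneg r q by simp
  ultimately have "(real q - 1) / 2 * wopt (3 * q - 3) \<le> sum w (greedy_on indep {} xs)"
    by (meson mult_right_mono order_trans)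
  then show ?thesis
    using i r unfolding gain_def threshold_greedy_eq q_def xs_def a_def A_def by simp
qed

lemma blocks_card_disjoint:
  assumes "3 * 3^i - 2 \<le> r"
  shows "card (middle_block i) = 2 * 3^i - 1" "card (top_block i) = 3^i - 1"
    "middle_block i \<inter> top_block i = {}"
proof -
  have inj: "inj_on (\<lambda>j. opt ! j) ({3^i - 1 ..< 3 * 3^i - 2} \<union> {..< 3^i - 1})"
    using assms opt_props(2,5) by (intro inj_on_nth) auto
  show "card (middle_block i) = 2 * 3^i - 1" "card (top_block i) = 3^i - 1"
    unfolding middle_block_def top_block_def
    using card_image[OF inj_on_subset[OF inj]] by auto
  show "middle_block i \<inter> top_block i = {}"
    unfolding middle_block_def top_block_def
    using inj_on_image_Int[OF inj, of "{3^i - 1 ..< 3 * 3^i - 2}" "{..< 3^i - 1}"] by auto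
qed

lemma card_good_zero: "2 ^ card E \<le> 4 * card {S\<in>Pow E. good 0 S}"
proof -
  define b where "b = opt ! 0"
  define Y where "Y = {y\<in>E. indep {y} \<and> y \<noteq> b}"
  have b: "b \<in> E" using opt_nth_ground rank_pos unfolding b_def by simp
  obtain B where B: "B \<subseteq> Y" "\<forall>y\<in>Y. \<exists>z\<in>B. w y \<le> w z" "\<forall>V\<subseteq>B. V = {} \<or> V = B"
  proof (cases "Y = {}")
    case False
    have "finite Y" using finite_ground unfolding Y_def by simp
    then have "Max (w ` Y) \<in> w ` Y" using False by simp
    then obtain s where "s \<in> Y" "w s = Max (w ` Y)" by auto
    moreover have "\<forall>y\<in>Y. w y \<le> Max (w ` Y)" using \<open>finite Y\<close> by simp
    ultimately show thesis using that[of "{s}"] by (auto simp: subset_singleton_iff)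
  qed (use that in auto)
  show ?thesis
  proof (rule card_Pow_two_halves[OF finite_ground, of "{b}" B "\<lambda>U. U = {}" "\<lambda>V. V = B" "good 0"])
    show "{b} \<subseteq> E" "B \<subseteq> E" "{b} \<inter> B = {}" using b B(1) unfolding Y_def by auto
    show "{b} - U = {}" if "U \<subseteq> {b}" "U \<noteq> {}" for U using that by auto
    show "B - V = B" if "V \<subseteq> B" "V \<noteq> B" for V using that B(3) by auto
    show "good 0 S" if "S \<subseteq> E" "S \<inter> {b} = {}" "S \<inter> B = B" for S
      using that B unfolding good_def b_def[symmetric] Y_def by fastforce
  qed
qed

lemma card_good:
  assumes "i = 0 \<or> 3 * 3^i - 2 \<le> r"
  shows "2 ^ card E \<le> 4 * card {S\<in>Pow E. good i S}"
proof (cases "i = 0")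
  case False
  then have r: "3 * 3^i - 2 \<le> r" using assms by simp
  define q :: nat where "q = 3 ^ i"
  have q: "3 \<le> q" using power_increasing[of 1 i "3::nat"] False unfolding q_def by simp
  note card = blocks_card_disjoint[OF r, folded q_def]
  have blocks_ground: "middle_block i \<subseteq> E" "top_block i \<subseteq> E"
    using blocks_subset_opt[OF r] opt_props(1) by (meson order_trans)+
  show ?thesis
  proof (rule card_Pow_two_halves[OF finite_ground blocks_ground card(3),
        of "\<lambda>U. q \<le> card U" "\<lambda>V. q - 1 \<le> 2 * card (top_block i - V)" "good i"])
    fix U assume U: "U \<subseteq> middle_block i" "\<not> q \<le> card U"
    have "finite U" using U(1) by (rule finite_subset) (simp add: middle_block_def)
    then have "card (middle_block i - U) = card (middle_block i) - card U"
      using U(1) by (rule card_Diff_subset)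
    then show "q \<le> card (middle_block i - U)" using U(2) card(1) by simp
  next
    fix V assume V: "V \<subseteq> top_block i" "\<not> q - 1 \<le> 2 * card (top_block i - V)"
    have "finite V" using V(1) by (rule finite_subset) (simp add: top_block_def)
    then have "card (top_block i - V) + card V = q - 1"
      using V(1) card(2) card_mono[OF _ V(1)] by (simp add: card_Diff_subset top_block_def)
    then show "q - 1 \<le> 2 * card (top_block i - (top_block i - V))"
      using V by (simp add: Diff_Diff_Int Int_absorb1)
  next
    fix S assume "S \<subseteq> E" "q \<le> card (S \<inter> middle_block i)"
      "q - 1 \<le> 2 * card (top_block i - S \<inter> top_block i)"
    moreover have "top_block i - S \<inter> top_block i = top_block i - S" by blast
    ultimately show "good i S" using False r unfolding good_def q_def by (simp add: Int_commute)
  qed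
qed (use card_good_zero in simp)

lemma opt_weight_le_sum_gain: "opt_weight E indep w \<le> 18 * (\<Sum>i\<le>flog3 r. gain i)"
proof -
  have "opt_weight E indep w \<le> (\<Sum>j<r. wopt j)"
    using opt_weight_le_sum_sample_mwis[OF matroid distinct_LE set_LE inj_LE nonneg]
    unfolding opt_def .
  also have "\<dots> \<le> (\<Sum>i\<le>flog3 r. if 3^(i+1) - 3 < r then 6 * 3^i * wopt (3^(i+1) - 3) else 0)"
    using rank_pos wopt_nonneg wopt_antimono by (rule sum_decreasing_le_ternary_blocks)
  also have "\<dots> \<le> (\<Sum>i\<le>flog3 r. 18 * gain i)"
  proof (rule sum_mono)
    fix i
    have "6 * 3^i * wopt (3 * 3^i - 3) \<le> 18 * ((3^i - 1) / 2 * wopt (3 * 3^i - 3))"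
      if "i \<noteq> 0" "3 * 3^i - 3 < r"
    proof -
      have "(3::real) \<le> 3^i" using power_increasing[of 1 i "3::real"] \<open>i \<noteq> 0\<close> by simp
      then have "6 * 3^i \<le> 18 * ((3^i - 1 :: real) / 2)" by simp
      then show ?thesis using wopt_nonneg[OF that(2)] mult_right_mono by (metis mult.assoc)
    qed
    then show "(if 3^(i+1) - 3 < r then 6 * 3^i * wopt (3^(i+1) - 3) else 0) \<le> 18 * gain i"
      using gain_nonneg[of i] wopt_nonneg[of 0] rank_pos by (auto simp: gain_def)
  qed
  finally show ?thesis by (simp add: sum_distrib_left)
qed

text \<open>\<open>wE\<close> agrees with \<open>sum w\<close> on subsets of \<open>E\<close> and is bounded, as needed for integrating
  along the binds of \<open>secretary_alg\<close>.\<close>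
definition wE :: "'a set \<Rightarrow> real" where "wE S = sum w (S \<inter> E)"

definition good_gain :: "'a set \<Rightarrow> real" where
  "good_gain S = (\<Sum>i\<le>flog3 r. if good i S then gain i else 0)"

definition threshold_phase :: "bool \<Rightarrow> 'a list \<Rightarrow> nat \<Rightarrow> 'a set pmf" where
  "threshold_phase known \<sigma> m =
     (let k = length (sample_mwis indep w (take m \<sigma>)) in
      bind_pmf (if known then return_pmf (flog3 r) else pmf_of_set {flog3 k, flog3 k + 1}) (\<lambda>t.
      bind_pmf (pmf_of_set {0..t}) (\<lambda>i. return_pmf (threshold_greedy indep w \<sigma> m (3 ^ i)))))"

lemma wE_nonneg: "0 \<le> wE S"
  unfolding wE_def using nonneg by (intro sum_nonneg) auto

lemma wE_bounded: "\<bar>wE S\<bar> \<le> sum w E"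
proof -
  have "wE S \<le> sum w E" unfolding wE_def using nonneg finite_ground by (intro sum_mono2) auto
  then show ?thesis using wE_nonneg[of S] by simp
qed

lemma wE_eq_sum: "S \<subseteq> E \<Longrightarrow> wE S = sum w S"
  unfolding wE_def by (simp add: Int_absorb2)

lemma sum_gain_le_sum_good_gain:
  "(\<Sum>i\<le>flog3 r. gain i) * 2 ^ card E \<le> 4 * (\<Sum>S\<in>Pow E. good_gain S)"
proof -
  have "gain i * 2 ^ card E \<le> 4 * (\<Sum>S\<in>Pow E. if good i S then gain i else 0)" for i
  proof (cases "i = 0 \<or> 3 * 3^i - 2 \<le> r")
    case True
    have "real (2 ^ card E) \<le> real (4 * card {S\<in>Pow E. good i S})"
      using card_good[OF True] by (rule of_nat_mono)
    then have "gain i * 2 ^ card E \<le> gain i * (4 * real (card {S\<in>Pow E. good i S}))"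
      using gain_nonneg[of i] by (simp add: mult_left_mono)
    moreover have "Pow E \<inter> {S. good i S} = {S\<in>Pow E. good i S}" by blast
    ultimately show ?thesis
      using finite_ground by (simp add: sum.If_cases mult_ac)
  qed (simp add: gain_def sum_nonneg)
  then have "(\<Sum>i\<le>flog3 r. gain i * 2 ^ card E)
      \<le> (\<Sum>i\<le>flog3 r. 4 * (\<Sum>S\<in>Pow E. if good i S then gain i else 0))"
    by (rule sum_mono)
  then show ?thesis
    unfolding good_gain_def by (simp add: sum_distrib_left sum_distrib_right sum.swap[of _ "Pow E"])
qed

lemma good_le_flog3_sample:
  assumes "\<sigma> \<in> permutations_of_set E" "good i (set (take m \<sigma>))"
  shows "i \<le> flog3 (length (sample_mwis indep w (take m \<sigma>)))"
  using good_threshold(1)[OF assms] by (cases "i = 0") (auto intro: le_flog3I)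

lemma good_gain_le_threshold_greedy:
  assumes \<sigma>: "\<sigma> \<in> permutations_of_set E"
  shows "(if good i (set (take m \<sigma>)) then gain i else 0)
    \<le> wE (threshold_greedy indep w \<sigma> m (3 ^ i))"
proof (cases "good i (set (take m \<sigma>))")
  case True
  then show ?thesis
    using gain_zero_le_threshold_greedy[OF \<sigma>] gain_le_threshold_greedy[OF \<sigma>]
      wE_eq_sum[OF threshold_greedy_subset[OF \<sigma>]]
    by (cases "i = 0") auto
qed (simp add: wE_nonneg)

definition mean_gain :: "'a list \<Rightarrow> nat \<Rightarrow> nat \<Rightarrow> real" where
  "mean_gain \<sigma> m t = (\<Sum>i\<in>{0..t}. wE (threshold_greedy indep w \<sigma> m (3 ^ i))) / real (t + 1)"

lemma expectation_threshold_phase_eq: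
  "measure_pmf.expectation (threshold_phase known \<sigma> m) wE =
    (let t = flog3 (length (sample_mwis indep w (take m \<sigma>))) in
     if known then mean_gain \<sigma> m (flog3 r) else (mean_gain \<sigma> m t + mean_gain \<sigma> m (t + 1)) / 2)"
  unfolding threshold_phase_def mean_gain_def Let_def
  by (simp add: expectation_bind_pmf[OF wE_bounded] integral_pmf_of_set)

lemma expectation_threshold_phase:
  assumes \<sigma>: "\<sigma> \<in> permutations_of_set E"
  shows "good_gain (set (take m \<sigma>)) / (real (flog3 r) + 2)
    \<le> measure_pmf.expectation (threshold_phase known \<sigma> m) wE"
proof -
  define t1 where "t1 = flog3 (length (sample_mwis indep w (take m \<sigma>)))"
  define V where "V i = wE (threshold_greedy indep w \<sigma> m (3 ^ i))" for i
  have V: "0 \<le> V i" for i unfolding V_def by (rule wE_nonneg)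
  have t1: "t1 \<le> flog3 r"
    unfolding t1_def by (rule flog3_mono[OF length_sample_mwis_le_rank[OF \<sigma>]])
  have "good_gain (set (take m \<sigma>)) = (\<Sum>i\<le>t1. if good i (set (take m \<sigma>)) then gain i else 0)"
    unfolding good_gain_def using t1 good_le_flog3_sample[OF \<sigma>]
    by (intro sum.mono_neutral_right) (auto simp: t1_def)
  also have "\<dots> \<le> (\<Sum>i\<le>t1. V i)"
    unfolding V_def by (intro sum_mono good_gain_le_threshold_greedy[OF \<sigma>])
  finally have "good_gain (set (take m \<sigma>)) / (real (flog3 r) + 2)
      \<le> (\<Sum>i\<le>t1. V i) / (real (flog3 r) + 2)"
    by (simp add: divide_right_mono)
  moreover have mean: "(\<Sum>i\<le>t1. V i) / (real (flog3 r) + 2) \<le> mean_gain \<sigma> m t"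
    if "t1 \<le> t" "t \<le> flog3 r + 1" for t
    unfolding mean_gain_def V_def[symmetric] using V that by (rule prefix_sum_div_le_mean)
  moreover have "(\<Sum>i\<le>t1. V i) / (real (flog3 r) + 2)
      \<le> measure_pmf.expectation (threshold_phase known \<sigma> m) wE"
    using mean[of t1] mean[of "t1 + 1"] mean[of "flog3 r"] t1
    unfolding expectation_threshold_phase_eq t1_def[symmetric] Let_def by (simp add: field_simps)
  ultimately show ?thesis by linarith
qed

lemma secretary_alg_eq:
  "secretary_alg known E indep w =
     bind_pmf (pmf_of_set (permutations_of_set E)) (\<lambda>\<sigma>.
     bind_pmf (bernoulli_pmf (1/2)) (\<lambda>b.
       if b then return_pmf (classical_secretary indep w \<sigma>)
       else bind_pmf (binomial_pmf (card E) (1/2)) (threshold_phase known \<sigma>)))"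
  unfolding secretary_alg_def threshold_phase_def Let_def ..

lemma set_pmf_secretary_alg: "set_pmf (secretary_alg known E indep w) \<subseteq> {S. indep S}"
proof -
  have "indep (classical_secretary indep w \<sigma>)" for \<sigma>
    using matroid_indep_empty[OF matroid]
    by (auto simp: classical_secretary_def Let_def split: option.split)
  moreover have "indep (threshold_greedy indep w \<sigma> m l)" for \<sigma> m l
    unfolding threshold_greedy_def Let_def
    by (rule greedy_on_indep[of indep "{}", OF matroid_indep_empty[OF matroid]])
  ultimately show ?thesis
    by (auto simp: secretary_alg_eq threshold_phase_def Let_def set_bind_pmf split: if_splits)
qed

lemma expectation_secretary_alg:
  "measure_pmf.expectation (secretary_alg known E indep w) (\<lambda>S. sum w S)
   = (\<Sum>\<sigma>\<in>permutations_of_set E. (wE (classical_secretary indep w \<sigma>)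
        + (\<Sum>m\<le>card E. real (card E choose m)
            * measure_pmf.expectation (threshold_phase known \<sigma> m) wE)
          / 2 ^ card E) / 2) / fact (card E)" (is "_ = ?rhs")
proof -
  have "measure_pmf.expectation (secretary_alg known E indep w) (\<lambda>S. sum w S)
      = measure_pmf.expectation (secretary_alg known E indep w) wE"
  proof (intro integral_cong_AE)
    show "AE S in measure_pmf (secretary_alg known E indep w). sum w S = wE S"
      using set_pmf_secretary_alg matroid_indep_subset_ground[OF matroid] wE_eq_sum
      by (fastforce simp: AE_measure_pmf_iff)
  qed simp_all
  also have "\<dots> = ?rhs"
    using finite_ground
    by (simp add: secretary_alg_eq expectation_bind_pmf[OF wE_bounded] integral_pmf_of_set
        expectation_binomial_pmf_half add_divide_distrib)
  finally show ?thesis .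
qed

lemma expectation_secretary_alg_nonneg:
  "0 \<le> measure_pmf.expectation (secretary_alg known E indep w) (\<lambda>S. sum w S)"
proof (rule integral_nonneg_AE)
  have "0 \<le> sum w S" if "S \<in> set_pmf (secretary_alg known E indep w)" for S
  proof -
    have "S \<subseteq> E" using that set_pmf_secretary_alg matroid_indep_subset_ground[OF matroid] by blast
    then show ?thesis using nonneg by (intro sum_nonneg) auto
  qed
  then show "AE S in measure_pmf (secretary_alg known E indep w). 0 \<le> sum w S"
    by (simp add: AE_measure_pmf_iff)
qed

lemma sum_good_gain_le_expectation:
  "(\<Sum>S\<in>Pow E. good_gain S)
    \<le> 2 * 2 ^ card E * (real (flog3 r) + 2)
      * measure_pmf.expectation (secretary_alg known E indep w) (\<lambda>S. sum w S)"
proof -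
  define n where "n = card E"
  define F where "F = real (flog3 r) + 2"
  define Ex where "Ex = measure_pmf.expectation (secretary_alg known E indep w) (\<lambda>S. sum w S)"
  define phase where "phase \<sigma> m = measure_pmf.expectation (threshold_phase known \<sigma> m) wE" for \<sigma> m
  define G where "G \<sigma> = (\<Sum>m\<le>n. real (n choose m) * good_gain (set (take m \<sigma>)))" for \<sigma>
  have F: "0 < F" unfolding F_def by simp
  have "(\<Sum>\<sigma>\<in>permutations_of_set E. G \<sigma>) = fact n * (\<Sum>S\<in>Pow E. good_gain S)"
    using sum_binomial_permutations_take[OF finite_ground, of good_gain]
    unfolding G_def n_def by (simp add: sum_distrib_left sum.swap[of _ "permutations_of_set E"])
  then have "(\<Sum>S\<in>Pow E. good_gain S) / (F * 2 ^ n * 2)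
      = (\<Sum>\<sigma>\<in>permutations_of_set E. G \<sigma> / (F * 2 ^ n * 2)) / fact n"
    by (simp add: sum_divide_distrib[symmetric])
  also have "\<dots> \<le> (\<Sum>\<sigma>\<in>permutations_of_set E. (wE (classical_secretary indep w \<sigma>)
        + (\<Sum>m\<le>n. real (n choose m) * phase \<sigma> m) / 2 ^ n) / 2) / fact n"
  proof (intro divide_right_mono sum_mono)
    fix \<sigma> assume \<sigma>: "\<sigma> \<in> permutations_of_set E"
    have "G \<sigma> / F = (\<Sum>m\<le>n. real (n choose m) * (good_gain (set (take m \<sigma>)) / F))"
      unfolding G_def by (simp add: sum_divide_distrib)
    also have "\<dots> \<le> (\<Sum>m\<le>n. real (n choose m) * phase \<sigma> m)"
      using expectation_threshold_phase[OF \<sigma>] unfolding phase_def F_def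
      by (intro sum_mono mult_left_mono) auto
    finally have "G \<sigma> / F / (2 ^ n * 2) \<le> (\<Sum>m\<le>n. real (n choose m) * phase \<sigma> m) / (2 ^ n * 2)"
      by (rule divide_right_mono) simp
    moreover have "(\<Sum>m\<le>n. real (n choose m) * phase \<sigma> m) / (2 ^ n * 2)
        \<le> (wE (classical_secretary indep w \<sigma>) + (\<Sum>m\<le>n. real (n choose m) * phase \<sigma> m) / 2 ^ n) / 2"
      using wE_nonneg[of "classical_secretary indep w \<sigma>"] by (simp add: add_divide_distrib)
    ultimately show "G \<sigma> / (F * 2 ^ n * 2)
        \<le> (wE (classical_secretary indep w \<sigma>) + (\<Sum>m\<le>n. real (n choose m) * phase \<sigma> m) / 2 ^ n) / 2"
      by (simp add: divide_divide_eq_left mult.assoc)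
  qed simp
  also have "\<dots> = measure_pmf.expectation (secretary_alg known E indep w) (\<lambda>S. sum w S)"
    unfolding expectation_secretary_alg n_def phase_def ..
  finally have "(\<Sum>S\<in>Pow E. good_gain S) \<le> 2 * 2 ^ n * F * Ex"
    using F unfolding Ex_def by (simp add: field_simps)
  then show ?thesis unfolding n_def F_def Ex_def .
qed

lemma opt_weight_le_expectation:
  "opt_weight E indep w
    \<le> 144 * (real (flog3 r) + 2)
      * measure_pmf.expectation (secretary_alg known E indep w) (\<lambda>S. sum w S)"
proof -
  define F where "F = real (flog3 r) + 2"
  define Ex where "Ex = measure_pmf.expectation (secretary_alg known E indep w) (\<lambda>S. sum w S)"
  have "(\<Sum>i\<le>flog3 r. gain i) * 2 ^ card E \<le> 4 * (2 * 2 ^ card E * F * Ex)"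
    using sum_gain_le_sum_good_gain sum_good_gain_le_expectation[of known]
    unfolding F_def Ex_def by linarith
  also have "\<dots> = (8 * F * Ex) * 2 ^ card E" by simp
  finally have "(\<Sum>i\<le>flog3 r. gain i) \<le> 8 * F * Ex" by simp
  then show ?thesis using opt_weight_le_sum_gain unfolding F_def Ex_def by linarith
qed

end

theorem theorem12:
  shows "\<exists>c::real. \<forall>(known::bool) (E::nat set) indep (w::nat \<Rightarrow> real).
     matroid E indep \<and> mrank E indep \<ge> 1 \<and>
     (\<forall>x\<in>E. 0 \<le> w x) \<and> inj_on w E \<longrightarrow>
     c * (1 + ln (real (mrank E indep))) *
       measure_pmf.expectation (secretary_alg known E indep w) (\<lambda>S. sum w S)
     \<ge> opt_weight E indep w"
proof (intro exI[of _ 288] allI impI)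
  fix known :: bool and E :: "nat set" and indep and w :: "nat \<Rightarrow> real"
  assume hyps: "matroid E indep \<and> mrank E indep \<ge> 1 \<and> (\<forall>x\<in>E. 0 \<le> w x) \<and> inj_on w E"
  obtain LE where "distinct LE" "set LE = E"
    using hyps finite_distinct_list[OF matroid_finite] by metis
  then interpret secretary_instance E indep w LE
    using hyps by unfold_locales auto
  have "144 * (real (flog3 r) + 2) \<le> 288 * (1 + ln (real r))"
    using flog3_le_ln[OF rank_pos] rank_pos by simp
  then show "288 * (1 + ln (real r)) *
      measure_pmf.expectation (secretary_alg known E indep w) (\<lambda>S. sum w S) \<ge> opt_weight E indep w"
    using opt_weight_le_expectation[of known] expectation_secretary_alg_nonneg[of known]
    by (meson mult_right_mono order_trans)
qed

end
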